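(* Let $X$ be a uniformly convex Banach space and $Y$ a finite-dimensional Banach space. Then the pair $(X,Y)$ has the sBPBp.
   Context: All Banach spaces are over $\mathbb{K}=\mathbb{R}$ or $\mathbb{C}$. $S_X$ denotes the unit sphere of $X$ and $\mathcal{L}(X,Y)$ the space of bounded linear operators from $X$ to $Y$ with the operator norm. A pair of Banach spaces $(X,Y)$ has the strong Bishop–Phelps–Bollobás property (sBPBp) if for every $\varepsilon>0$ and every $T\in\mathcal{L}(X,Y)$ with $\|T\|=1$ there exists $\eta=\eta(\varepsilon,T)>0$ such that whenever $x_0\in S_X$ satisfies $\|T(x_0)\|>1-\eta$, there exists $x_1\in S_X$ with $\|T(x_1)\|=1$ and $\|x_1-x_0\|<\varepsilon$. *)

theory Defs
  imports "HOL-Analysis.Analysis"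
begin

definition uniformly_convex :: "'a::real_normed_vector itself \<Rightarrow> bool" where
  "uniformly_convex _ \<longleftrightarrow>
     (\<forall>\<epsilon>>0. \<exists>\<delta>>0. \<forall>x y::'a. norm x = 1 \<and> norm y = 1 \<and> norm (x - y) \<ge> \<epsilon>
        \<longrightarrow> norm ((1/2) *\<^sub>R (x + y)) \<le> 1 - \<delta>)"

definition finite_dim :: "'a::real_vector itself \<Rightarrow> bool" where
  "finite_dim _ \<longleftrightarrow> (\<exists>B::'a set. finite B \<and> span B = UNIV)"

definition sBPBp :: "'a::real_normed_vector itself \<Rightarrow> 'b::real_normed_vector itself \<Rightarrow> bool" where
  "sBPBp _ _ \<longleftrightarrow>
     (\<forall>\<epsilon>>0. \<forall>T::'a \<Rightarrow> 'b. bounded_linear T \<and> onorm T = 1 \<longrightarrow>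
        (\<exists>\<eta>>0. \<forall>x0::'a. norm x0 = 1 \<and> norm (T x0) > 1 - \<eta> \<longrightarrow>
           (\<exists>x1::'a. norm x1 = 1 \<and> norm (T x1) = 1 \<and> norm (x1 - x0) < \<epsilon>)))"

end

theory Submission
  imports Defs
begin

text \<open>
  Suppose the property fails for some \<open>\<epsilon>\<close> and \<open>T\<close>. Then there are unit vectors \<open>x\<^sub>n\<close> with
  \<open>\<parallel>T x\<^sub>n\<parallel> \<rightarrow> 1\<close>, each at distance at least \<open>\<epsilon>\<close> from every norm-attaining unit vector.
  Since \<open>Y\<close> is finite-dimensional, a subsequence of \<open>T x\<^sub>n\<close> converges to some \<open>y\<close>, necessarily
  with \<open>\<parallel>y\<parallel> = 1\<close>. If two terms of that subsequence were \<open>e\<close>-apart, uniform convexity would push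
  the norm of their midpoint below \<open>1 - \<delta>\<close>, while the image of the midpoint is close to \<open>y\<close>;
  as \<open>\<parallel>T\<parallel> = 1\<close>, the subsequence is therefore Cauchy. Its limit is a norm-attaining unit vector
  arbitrarily close to the \<open>x\<^sub>n\<close>, a contradiction.
\<close>

lemma infdist_subspace_le_norm_scaleR_add:
  fixes a :: "'a::real_normed_vector"
  assumes "subspace A" and "z \<in> A"
  shows "\<bar>t\<bar> * infdist a A \<le> norm (t *\<^sub>R a + z)"
proof (cases "t = 0")
  case True
  then show ?thesis by simp
next
  case False
  have "- (z /\<^sub>R t) \<in> A"
    using assms by (intro subspace_neg subspace_scale)
  then have "infdist a A \<le> dist a (- (z /\<^sub>R t))"
    by (rule infdist_le)
  also have "\<dots> = norm ((1 / t) *\<^sub>R (t *\<^sub>R a + z))"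
    using False by (simp add: dist_norm scaleR_add_right divide_inverse_commute)
  also have "\<dots> = norm (t *\<^sub>R a + z) / \<bar>t\<bar>"
    by simp
  finally show ?thesis
    using False by (metis mult.commute pos_le_divide_eq zero_less_abs_iff)
qed

lemma closed_if_bounded_sequences_subconverge:
  fixes A :: "'a::metric_space set"
  assumes "\<And>f :: nat \<Rightarrow> 'a. (\<And>n. f n \<in> A) \<Longrightarrow> bounded (range f) \<Longrightarrow>
             \<exists>l\<in>A. \<exists>r. strict_mono r \<and> (f \<circ> r) \<longlonglongrightarrow> l"
  shows "closed A"
  unfolding closed_sequential_limits
proof (intro allI impI, elim conjE)
  fix f l
  assume f: "\<forall>n. f n \<in> A" and lim: "f \<longlonglongrightarrow> l"
  have "bounded (range f)"
    using lim by (rule convergent_imp_bounded)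
  with f obtain l' r where "l' \<in> A" "strict_mono r" "(f \<circ> r) \<longlonglongrightarrow> l'"
    using assms[of f] by blast
  moreover have "(f \<circ> r) \<longlonglongrightarrow> l"
    using lim \<open>strict_mono r\<close> by (rule LIMSEQ_subseq_LIMSEQ)
  ultimately show "l \<in> A"
    using LIMSEQ_unique by auto
qed

text \<open>
  Induction on the spanning set: a new vector \<open>a \<notin> span S\<close> has positive distance from the
  closed subspace \<open>span S\<close>, which bounds the \<open>a\<close>-coefficients of a bounded sequence in
  \<open>span (insert a S)\<close>; the coefficients and the remainders in \<open>span S\<close> then converge along
  nested subsequences.
\<close>
lemma finite_span_bounded_imp_convergent_subsequence:
  fixes S :: "'a::real_normed_vector set" and f :: "nat \<Rightarrow> 'a"
  assumes "finite S" and "\<And>n. f n \<in> span S" and "bounded (range f)"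
  shows "\<exists>l\<in>span S. \<exists>r. strict_mono r \<and> (f \<circ> r) \<longlonglongrightarrow> l"
  using assms
proof (induction S arbitrary: f rule: finite_induct)
  case empty
  then have "(f \<circ> id) \<longlonglongrightarrow> 0"
    by (simp add: o_def)
  then show ?case
    using strict_mono_id span_zero by blast
next
  case (insert a S)
  show ?case
  proof (cases "a \<in> span S")
    case True
    then show ?thesis
      using insert by (simp add: span_redundant)
  next
    case False
    have "closed (span S)"
      using insert.IH by (rule closed_if_bounded_sequences_subconverge)
    then have d: "infdist a (span S) > 0"
      using False infdist_pos_not_in_closed span_zero by blast
    have "\<forall>n. \<exists>s. f n - s *\<^sub>R a \<in> span S"
      using insert.prems(1) span_insert by blast
    then obtain t where t: "\<And>n. f n - t n *\<^sub>R a \<in> span S"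
      by metis
    define z where "z n = f n - t n *\<^sub>R a" for n
    obtain M where M: "\<And>n. norm (f n) \<le> M"
      using insert.prems(2) unfolding bounded_iff by blast
    have tM: "\<bar>t n\<bar> \<le> M / infdist a (span S)" for n
      using infdist_subspace_le_norm_scaleR_add[OF subspace_span t[of n], where a = a and t = "t n"]
        M[of n] d
      by (simp add: field_simps)
    then have "bounded (range t)"
      unfolding bounded_iff by auto
    then obtain c r1 where r1: "strict_mono r1" "(t \<circ> r1) \<longlonglongrightarrow> c"
      using bounded_imp_convergent_subsequence by blast
    have "norm (z n) \<le> M + M / infdist a (span S) * norm a" for n
      using norm_triangle_ineq4[of "f n" "t n *\<^sub>R a"] M[of n] tM[of n]
        mult_right_mono[OF tM[of n] norm_ge_zero[of a]]
      by (simp add: z_def)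
    then have "bounded (range (z \<circ> r1))"
      unfolding bounded_iff by auto
    moreover have "(z \<circ> r1) n \<in> span S" for n
      using t by (simp add: z_def)
    ultimately obtain w r2 where w: "w \<in> span S" "strict_mono r2" "(z \<circ> r1 \<circ> r2) \<longlonglongrightarrow> w"
      using insert.IH by blast
    have "(\<lambda>n. (t \<circ> r1 \<circ> r2) n *\<^sub>R a + (z \<circ> r1 \<circ> r2) n) \<longlonglongrightarrow> c *\<^sub>R a + w"
      using LIMSEQ_subseq_LIMSEQ[OF r1(2) w(2)] w(3) by (intro tendsto_intros)
    then have "(f \<circ> (r1 \<circ> r2)) \<longlonglongrightarrow> c *\<^sub>R a + w"
      by (simp add: z_def o_def)
    moreover have "c *\<^sub>R a + w \<in> span (insert a S)"
      using w(1) span_mono[of S "insert a S"]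
      by (blast intro: span_add span_scale span_base)
    ultimately show ?thesis
      using r1(1) w(2) strict_mono_o by blast
  qed
qed

lemma finite_dim_bounded_imp_convergent_subsequence:
  fixes f :: "nat \<Rightarrow> 'a::real_normed_vector"
  assumes "finite_dim TYPE('a)" and "bounded (range f)"
  shows "\<exists>l r. strict_mono r \<and> (f \<circ> r) \<longlonglongrightarrow> l"
proof -
  obtain B :: "'a set" where "finite B" "span B = UNIV"
    using assms(1) unfolding finite_dim_def by blast
  then show ?thesis
    using finite_span_bounded_imp_convergent_subsequence[of B f] assms(2) by auto
qed

lemma uniformly_convexD:
  assumes "uniformly_convex TYPE('a::real_normed_vector)" and "e > 0"
  obtains \<delta> where "\<delta> > 0"
    and "\<And>x y::'a. norm x = 1 \<Longrightarrow> norm y = 1 \<Longrightarrow> e \<le> norm (x - y) \<Longrightarrow>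
           norm ((1/2) *\<^sub>R (x + y)) \<le> 1 - \<delta>"
  using assms unfolding uniformly_convex_def by meson

lemma norm_le_if_onorm_le_1:
  assumes "bounded_linear T" and "onorm T \<le> 1"
  shows "norm (T x) \<le> norm x"
  using onorm[OF assms(1), of x] mult_right_mono[OF assms(2) norm_ge_zero[of x]] by simp

lemma norm_midpoint_gt_if_images_near_unit:
  fixes T :: "'a::real_normed_vector \<Rightarrow> 'b::real_normed_vector"
  assumes T: "bounded_linear T" "onorm T \<le> 1" and "norm y = 1"
    and "norm (T x - y) < \<delta>" and "norm (T x' - y) < \<delta>"
  shows "1 - \<delta> < norm ((1/2) *\<^sub>R (x + x'))"
proof -
  interpret T: bounded_linear T by (rule T(1))
  let ?m = "(1/2) *\<^sub>R (x + x')"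
  have "T ?m - y = (1/2) *\<^sub>R (T x - y) + (1/2) *\<^sub>R (T x' - y)"
    by (simp add: T.scaleR T.add algebra_simps flip: scaleR_add_left)
  then have "norm (T ?m - y) < \<delta>"
    using norm_triangle_ineq[of "(1/2) *\<^sub>R (T x - y)" "(1/2) *\<^sub>R (T x' - y)"] assms(4,5)
    by simp
  then have "1 - \<delta> < norm (T ?m)"
    using norm_triangle_ineq2[of y "T ?m"] \<open>norm y = 1\<close> by (simp add: norm_minus_commute)
  also have "\<dots> \<le> norm ?m"
    using T by (rule norm_le_if_onorm_le_1)
  finally show ?thesis .
qed

lemma uniformly_convex_Cauchy_if_images_converge_to_unit:
  fixes T :: "'a::real_normed_vector \<Rightarrow> 'b::real_normed_vector"
  assumes "uniformly_convex TYPE('a)" and "bounded_linear T" and "onorm T \<le> 1"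
    and "\<And>n. norm (u n) = 1" and "(\<lambda>n. T (u n)) \<longlonglongrightarrow> y" and "norm y = 1"
  shows "Cauchy u"
proof (rule metric_CauchyI)
  fix e :: real
  assume "e > 0"
  with assms(1) obtain \<delta> where "\<delta> > 0" and \<delta>:
    "\<And>x y::'a. norm x = 1 \<Longrightarrow> norm y = 1 \<Longrightarrow> e \<le> norm (x - y) \<Longrightarrow>
       norm ((1/2) *\<^sub>R (x + y)) \<le> 1 - \<delta>"
    by (rule uniformly_convexD) blast
  then obtain M where M: "\<And>n. n \<ge> M \<Longrightarrow> norm (T (u n) - y) < \<delta>"
    using assms(5) unfolding LIMSEQ_iff by blast
  have "dist (u m) (u n) < e" if "m \<ge> M" "n \<ge> M" for m n
    using \<delta>[OF assms(4) assms(4), of m n]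
      norm_midpoint_gt_if_images_near_unit[OF assms(2,3,6) M[OF that(1)] M[OF that(2)]]
    by (force simp: dist_norm)
  then show "\<exists>M. \<forall>m\<ge>M. \<forall>n\<ge>M. dist (u m) (u n) < e"
    by blast
qed

lemma uniformly_convex_norm_attaining_limit:
  fixes T :: "'a::banach \<Rightarrow> 'b::real_normed_vector"
  assumes "uniformly_convex TYPE('a)" and "bounded_linear T" and "onorm T \<le> 1"
    and "\<And>n. norm (u n) = 1" and "(\<lambda>n. T (u n)) \<longlonglongrightarrow> y" and "norm y = 1"
  obtains x where "u \<longlonglongrightarrow> x" and "norm x = 1" and "norm (T x) = 1"
proof -
  obtain x where x: "u \<longlonglongrightarrow> x"
    using uniformly_convex_Cauchy_if_images_converge_to_unit[OF assms] convergent_def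
      Cauchy_convergent_iff by blast
  have "(\<lambda>n. norm (u n)) \<longlonglongrightarrow> norm x"
    using x by (rule tendsto_norm)
  then have "norm x = 1"
    using assms(4) by (simp add: LIMSEQ_const_iff)
  moreover have "T x = y"
    using bounded_linear.tendsto[OF assms(2) x] assms(5) LIMSEQ_unique by blast
  ultimately show ?thesis
    using that x assms(6) by blast
qed

lemma almost_norming_sequence_subconverges:
  fixes T :: "'a::banach \<Rightarrow> 'b::real_normed_vector"
  assumes "uniformly_convex TYPE('a)" and "finite_dim TYPE('b)"
    and "bounded_linear T" and "onorm T \<le> 1"
    and "\<And>n. norm (u n) = 1" and "(\<lambda>n. norm (T (u n))) \<longlonglongrightarrow> 1"
  obtains r x where "strict_mono r" and "(u \<circ> r) \<longlonglongrightarrow> x" and "norm x = 1" and "norm (T x) = 1"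
proof -
  have "norm (T (u n)) \<le> 1" for n
    using norm_le_if_onorm_le_1[OF assms(3,4)] assms(5) by metis
  then have "bounded (range (\<lambda>n. T (u n)))"
    unfolding bounded_iff by blast
  then obtain r y where r: "strict_mono r" and y: "((\<lambda>n. T (u n)) \<circ> r) \<longlonglongrightarrow> y"
    using finite_dim_bounded_imp_convergent_subsequence[OF assms(2)] by blast
  have "((\<lambda>n. norm (T (u n))) \<circ> r) \<longlonglongrightarrow> norm y"
    using tendsto_norm[OF y] by (simp add: o_def)
  moreover have "((\<lambda>n. norm (T (u n))) \<circ> r) \<longlonglongrightarrow> 1"
    using LIMSEQ_subseq_LIMSEQ[OF assms(6) r] .
  ultimately have "norm y = 1"
    using LIMSEQ_unique by blast
  then obtain x where "(u \<circ> r) \<longlonglongrightarrow> x" "norm x = 1" "norm (T x) = 1"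
    using uniformly_convex_norm_attaining_limit[OF assms(1,3,4), of "u \<circ> r" y] assms(5) y
    by (auto simp: o_def)
  then show ?thesis
    using that r by blast
qed

theorem mainTheorem4:
  assumes "uniformly_convex TYPE('a::banach)"
    and "finite_dim TYPE('b::banach)"
  shows "sBPBp TYPE('a) TYPE('b)"
  unfolding sBPBp_def
proof (intro allI impI, elim conjE, rule ccontr)
  fix \<epsilon> :: real and T :: "'a \<Rightarrow> 'b"
  assume T: "bounded_linear T" "onorm T = 1" and "\<epsilon> > 0"
  let ?far = "\<lambda>x0. \<forall>x1. norm x1 = 1 \<and> norm (T x1) = 1 \<longrightarrow> \<not> norm (x1 - x0) < \<epsilon>"
  assume "\<not> (\<exists>\<eta>>0. \<forall>x0. norm x0 = 1 \<and> norm (T x0) > 1 - \<eta> \<longrightarrow>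
           (\<exists>x1. norm x1 = 1 \<and> norm (T x1) = 1 \<and> norm (x1 - x0) < \<epsilon>))"
  then have "\<forall>n. \<exists>x0. norm x0 = 1 \<and> norm (T x0) > 1 - inverse (real (Suc n)) \<and> ?far x0"
    by (metis inverse_positive_iff_positive of_nat_0_less_iff zero_less_Suc)
  then obtain u where u: "\<And>n. norm (u n) = 1" "\<And>n. norm (T (u n)) > 1 - inverse (real (Suc n))"
    and far: "\<And>n. ?far (u n)"
    by metis
  have upper: "norm (T (u n)) \<le> 1" for n
    using norm_le_if_onorm_le_1[OF T(1)] T(2) u(1) by (metis order_refl)
  have "(\<lambda>n. 1 - inverse (real (Suc n))) \<longlonglongrightarrow> 1"
    using tendsto_diff[OF tendsto_const LIMSEQ_inverse_real_of_nat, of 1] by simp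
  then have "(\<lambda>n. norm (T (u n))) \<longlonglongrightarrow> 1"
    by (rule tendsto_sandwich[rotated 2, OF _ tendsto_const])
      (use u(2) upper in \<open>auto intro!: always_eventually less_imp_le\<close>)
  then obtain r x where "(u \<circ> r) \<longlonglongrightarrow> x" "norm x = 1" "norm (T x) = 1"
    using almost_norming_sequence_subconverges[OF assms T(1)] T(2) u(1) by (metis order_refl)
  then obtain n where "norm ((u \<circ> r) n - x) < \<epsilon>"
    using \<open>\<epsilon> > 0\<close> unfolding LIMSEQ_iff by blast
  then show False
    using far[of "r n"] \<open>norm x = 1\<close> \<open>norm (T x) = 1\<close> by (simp add: norm_minus_commute)
qed

end
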